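(* For every $\bar\mu_0\ge0$ there exist constants $c_k>0$ and $c_{1,k}>0$ (which may depend on $k$, $L$, $a$, $\bar\mu_0$, $d$) such that for all $x,y\in\eta\mathbb Z^d$, $$|G_k(x,y)|\le c_k\,e^{-c_{1,k}|x-y|}.$$
   Context: Setup: $d\ge1$, odd integer $L>1$, integer $k\ge1$, $\eta=L^{-k}$. $\mathcal L^2(\eta\mathbb Z^d)$ has inner product $\eta^d\sum_{x\in\eta\mathbb Z^d}\overline{f(x)}g(x)$. Free Laplacian $(\Delta^\eta f)(x)=\eta^{-2}\sum_{\mu}(f(x+\eta e_\mu)-2f(x)+f(x-\eta e_\mu))$. For $y\in\mathbb Z^d$, $B_k(y)=\{x\in\eta\mathbb Z^d: y_\mu\le x_\mu<y_\mu+1\ \forall\mu\}$; $(Q_kf)(y)=L^{-kd}\sum_{x\in B_k(y)}f(x)$, $(Q_k^*h)(x)=h(y_x)$ with $x\in B_k(y_x)$. Fix $a\in(0,1]$, $a_k=a\frac{1-L^{-2}}{1-L^{-2k}}$, $\bar\mu_k=L^{2k}\bar\mu_0$, and $G_k=(-\Delta^\eta+\bar\mu_k+a_kQ_k^*Q_k)^{-1}$ (a bounded operator). Its kernel is $G_k(x,y)=\langle\delta^\eta_x,G_k\delta^\eta_y\rangle$, where $\delta^\eta_x=\eta^{-d}\mathbb 1_{\{x\}}$. *)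

theory Defs
  imports "HOL-Analysis.Analysis"
begin

text \<open>Points of the lattice eta Z^d are represented by integer vectors n :: int^'d,
  standing for the point x = eta * n.  The dimension d is CARD('d).\<close>

definition eta :: "nat \<Rightarrow> nat \<Rightarrow> real" where
  "eta L k = 1 / real L ^ k"

definition lat_pt :: "real \<Rightarrow> int^'d \<Rightarrow> real^'d" where
  "lat_pt h n = (\<chi> i. h * real_of_int (n $ i))"

definition lap :: "real \<Rightarrow> (int^'d \<Rightarrow> real) \<Rightarrow> int^'d \<Rightarrow> real" where
  "lap h f n = (1 / h^2) * (\<Sum>\<mu>\<in>UNIV. f (n + axis \<mu> 1) - 2 * f n + f (n - axis \<mu> 1))"

definition block :: "nat \<Rightarrow> nat \<Rightarrow> int^'d \<Rightarrow> (int^'d) set" where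
  "block L k y = {n. \<forall>\<mu>. real_of_int (y $ \<mu>) \<le> eta L k * real_of_int (n $ \<mu>)
                        \<and> eta L k * real_of_int (n $ \<mu>) < real_of_int (y $ \<mu>) + 1}"

definition Qk :: "nat \<Rightarrow> nat \<Rightarrow> (int^'d \<Rightarrow> real) \<Rightarrow> int^'d \<Rightarrow> real" where
  "Qk L k f y = (1 / real L ^ (k * CARD('d))) * (\<Sum>n\<in>block L k y. f n)"

definition Qk_adj :: "nat \<Rightarrow> nat \<Rightarrow> (int^'d \<Rightarrow> real) \<Rightarrow> int^'d \<Rightarrow> real" where
  "Qk_adj L k g n = g (THE y. n \<in> block L k y)"

definition a_k :: "nat \<Rightarrow> nat \<Rightarrow> real \<Rightarrow> real" where
  "a_k L k a = a * (1 - real L powi (-2)) / (1 - real L powi (-2 * int k))"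

definition mu_k :: "nat \<Rightarrow> nat \<Rightarrow> real \<Rightarrow> real" where
  "mu_k L k mu0 = real L ^ (2 * k) * mu0"

definition Aop :: "nat \<Rightarrow> nat \<Rightarrow> real \<Rightarrow> real \<Rightarrow> (int^'d \<Rightarrow> real) \<Rightarrow> int^'d \<Rightarrow> real" where
  "Aop L k a mu0 f n = - lap (eta L k) f n + mu_k L k mu0 * f n
                        + a_k L k a * Qk_adj L k (Qk L k f) n"

definition delta_eta :: "real \<Rightarrow> int^'d \<Rightarrow> int^'d \<Rightarrow> real" where
  "delta_eta h m n = (if n = m then 1 / h ^ CARD('d) else 0)"

definition sq_summable :: "(int^'d \<Rightarrow> real) \<Rightarrow> bool" where
  "sq_summable f \<longleftrightarrow> (\<lambda>z. (f z)^2) summable_on UNIV"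

text \<open>Kernel G_k(x,y) = <delta_x, G_k delta_y> = (G_k delta_y)(x), where G_k delta_y is the
  unique L^2 function g with (-Delta + mu_k + a_k Q^*Q) g = delta_y.\<close>
definition Gker :: "nat \<Rightarrow> nat \<Rightarrow> real \<Rightarrow> real \<Rightarrow> int^'d \<Rightarrow> int^'d \<Rightarrow> real" where
  "Gker L k a mu0 n m =
     (THE g. sq_summable g \<and> Aop L k a mu0 g = delta_eta (eta L k) m) n"

end

theory Submission
  imports Defs "HOL-Library.Groups_Big_Fun"
begin

(* Write N = L^k. On the integer lattice the operator of the theorem becomes
   A = N^2 (-Laplacian) + mu + alpha P, where P averages over the blocks of side N.
   A is local (of range d N), symmetric, has bounded matrix entries, and is coercive:
   the Poincare inequality on each block bounds f - P f by the Dirichlet energy, and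
   <f, P f> = |P f|^2.  Hence I - eps A is an l2-contraction for small eps, and the
   Neumann series eps * sum_j (I - eps A)^j delta_m converges to a square-summable
   solution of A g = delta_m.  Its j-th term vanishes at distance more than j d N from m
   and is bounded by q^(j/2), which gives exponential decay in |x - m|.  A square-summable
   w with A w = 0 vanishes, since w(p) is the pairing of w with (I - eps A)^J delta_p,
   which tends to 0.  So G_k is this solution, up to the normalisation eta^(-d) of delta^eta. *)

abbreviation finsupp :: "('a \<Rightarrow> 'b::zero) \<Rightarrow> bool" where
  "finsupp f \<equiv> finite {x. f x \<noteq> 0}"

lemma finsupp_add: "finsupp f \<Longrightarrow> finsupp g \<Longrightarrow> finsupp (\<lambda>x. f x + g x :: 'b::monoid_add)"
  by (rule finite_subset[of _ "{x. f x \<noteq> 0} \<union> {x. g x \<noteq> 0}"]) auto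

lemma finsupp_diff: "finsupp f \<Longrightarrow> finsupp g \<Longrightarrow> finsupp (\<lambda>x. f x - g x :: 'b::group_add)"
  by (rule finite_subset[of _ "{x. f x \<noteq> 0} \<union> {x. g x \<noteq> 0}"]) auto

lemma finsupp_mult_left: "finsupp f \<Longrightarrow> finsupp (\<lambda>x. f x * g x :: 'b::mult_zero)"
  by (rule finite_subset[of _ "{x. f x \<noteq> 0}"]) auto

lemma finsupp_mult_right: "finsupp g \<Longrightarrow> finsupp (\<lambda>x. f x * g x :: 'b::mult_zero)"
  by (rule finite_subset[of _ "{x. g x \<noteq> 0}"]) auto

lemma finsupp_power2: "finsupp f \<Longrightarrow> finsupp (\<lambda>x. (f x)\<^sup>2 :: real)"
  by (rule finite_subset[of _ "{x. f x \<noteq> 0}"]) auto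

lemma finsupp_shift: "finsupp f \<Longrightarrow> finsupp (\<lambda>x. f (x + c :: 'a::group_add))"
  by (rule finite_subset[of _ "(\<lambda>y. y - c) ` {y. f y \<noteq> 0}"]) (auto simp: image_iff, metis add_diff_cancel)

lemma finsupp_sum:
  "finite I \<Longrightarrow> (\<And>i. i \<in> I \<Longrightarrow> finsupp (F i)) \<Longrightarrow> finsupp (\<lambda>x. \<Sum>i\<in>I. F i x :: 'b::comm_monoid_add)"
  by (rule finite_subset[of _ "\<Union>i\<in>I. {x. F i x \<noteq> 0}"]) (auto elim: sum.not_neutral_contains_not_neutral)

lemma finsupp_indicator: "finite S \<Longrightarrow> finsupp (indicator S :: 'a \<Rightarrow> 'b::zero_neq_one)"
  by (rule finite_subset[of _ S]) (auto simp: indicator_def)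

lemma Sum_any_diff:
  fixes f g :: "'a \<Rightarrow> 'b::ab_group_add"
  assumes f: "finsupp f" and g: "finsupp g"
  shows "(\<Sum>x. f x - g x) = Sum_any f - Sum_any g"
proof -
  have "Sum_any (\<lambda>x. - g x) = - Sum_any g"
    using g by (simp add: Sum_any.expand_superset[of "{x. g x \<noteq> 0}"] sum_negf)
  moreover have "finsupp (\<lambda>x. - g x)" using g by simp
  ultimately show ?thesis
    using f Sum_any.distrib[of f "\<lambda>x. - g x"] by simp
qed

lemma Sum_any_cmult: "finsupp f \<Longrightarrow> (\<Sum>x. c * f x) = c * (Sum_any f :: 'b::semiring_0)"
  by (simp add: Sum_any_right_distrib)

lemma Sum_any_sum:
  assumes "finite I" "\<And>i. i \<in> I \<Longrightarrow> finsupp (F i)"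
  shows "(\<Sum>x. \<Sum>i\<in>I. F i x) = (\<Sum>i\<in>I. Sum_any (F i) :: 'b::comm_monoid_add)"
  using assms
proof (induction I rule: finite_induct)
  case (insert i I)
  then show ?case by (simp add: Sum_any.distrib finsupp_sum)
qed simp

lemma Sum_any_shift: "(\<Sum>x. f (x + c)) = (Sum_any f :: 'b::comm_monoid_add)" for c :: "'a::group_add"
proof (rule Sum_any.reindex_cong[symmetric])
  show "bij (\<lambda>x::'a. x + c)" by (rule o_bij[of "\<lambda>x. x - c"]) (auto simp: fun_eq_iff)
qed (simp add: o_def)

lemma Sum_any_mono:
  fixes f g :: "'a \<Rightarrow> 'b::ordered_comm_monoid_add"
  assumes "finsupp f" "finsupp g" "\<And>x. f x \<le> g x"
  shows "Sum_any f \<le> Sum_any g"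
proof -
  let ?S = "{x. f x \<noteq> 0} \<union> {x. g x \<noteq> 0}"
  have "Sum_any f = sum f ?S" "Sum_any g = sum g ?S"
    using assms by (auto intro: Sum_any.expand_superset)
  then show ?thesis using assms by (simp add: sum_mono)
qed

lemma Sum_any_nonneg: "(\<And>x. 0 \<le> f x) \<Longrightarrow> 0 \<le> (Sum_any f :: 'b::ordered_comm_monoid_add)"
  by (cases "finsupp f") (auto simp: Sum_any.expand_set intro: sum_nonneg)

lemma sum_le_Sum_any:
  fixes f :: "'a \<Rightarrow> 'b::ordered_comm_monoid_add"
  assumes "finite A" "finsupp f" "\<And>x. 0 \<le> f x"
  shows "sum f A \<le> Sum_any f"
proof -
  have "Sum_any f = sum f (A \<union> {x. f x \<noteq> 0})"
    using assms by (intro Sum_any.expand_superset) auto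
  moreover have "sum f A \<le> sum f (A \<union> {x. f x \<noteq> 0})"
    using assms by (intro sum_mono2) auto
  ultimately show ?thesis by simp
qed

lemma Sum_any_indicator_mult: "(\<Sum>x. indicator {a} x * f x) = (f a :: 'b::semiring_1)"
proof -
  have "indicator {a} x * f x = (if x = a then f x else 0)" for x
    by (simp add: indicator_def)
  then show ?thesis by simp
qed

lemma Sum_any_telescoping:
  fixes H :: "'i \<Rightarrow> 'a::group_add \<Rightarrow> 'b::ab_group_add"
  assumes "finite I" "\<And>i. i \<in> I \<Longrightarrow> finsupp (H i)"
  shows "(\<Sum>x. \<Sum>i\<in>I. H i (x + c i) - H i x) = 0"
proof -
  have "(\<Sum>x. H i (x + c i) - H i x) = 0" if "i \<in> I" for i
    using assms(2)[OF that] by (simp add: Sum_any_diff finsupp_shift Sum_any_shift)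
  moreover have "(\<Sum>x. \<Sum>i\<in>I. H i (x + c i) - H i x) = (\<Sum>i\<in>I. \<Sum>x. H i (x + c i) - H i x)"
    using assms by (intro Sum_any_sum finsupp_diff finsupp_shift)
  ultimately show ?thesis by simp
qed

lemma Sum_any_lincomb3:
  assumes "finsupp a" "finsupp b" "finsupp c"
  shows "Sum_any (\<lambda>x. p * a x + q * b x + r * c x) = p * Sum_any a + q * Sum_any b + (r * Sum_any c :: real)"
proof -
  define S where "S = {x. a x \<noteq> 0} \<union> {x. b x \<noteq> 0} \<union> {x. c x \<noteq> 0}"
  have S: "finite S" using assms by (simp add: S_def)
  have "Sum_any (\<lambda>x. p * a x + q * b x + r * c x) = (\<Sum>x\<in>S. p * a x + q * b x + r * c x)"
    "Sum_any a = sum a S" "Sum_any b = sum b S" "Sum_any c = sum c S"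
    by (intro Sum_any.expand_superset[OF S]; auto simp: S_def)+
  then show ?thesis by (simp add: sum.distrib sum_distrib_left)
qed

lemma L2_set_sum_le: "finite J \<Longrightarrow> L2_set (\<lambda>x. \<Sum>j\<in>J. F j x) S \<le> (\<Sum>j\<in>J. L2_set (F j) S)"
proof (induction J rule: finite_induct)
  case (insert i J)
  have "L2_set (\<lambda>x. F i x + (\<Sum>j\<in>J. F j x)) S \<le> L2_set (F i) S + L2_set (\<lambda>x. \<Sum>j\<in>J. F j x) S"
    by (rule L2_set_triangle_ineq)
  then show ?case using insert by simp
qed (simp add: L2_set_def)

definition l1_dist :: "int^'d \<Rightarrow> int^'d \<Rightarrow> int" where
  "l1_dist x y = (\<Sum>\<mu>\<in>UNIV. \<bar>x$\<mu> - y$\<mu>\<bar>)"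

lemma l1_dist_commute: "l1_dist x y = l1_dist y x"
  by (simp add: l1_dist_def abs_minus_commute)

lemma l1_dist_triangle: "l1_dist x z \<le> l1_dist x y + l1_dist y z"
  unfolding l1_dist_def sum.distrib[symmetric] by (intro sum_mono) linarith

lemma l1_dist_nonneg: "0 \<le> l1_dist x y"
  by (simp add: l1_dist_def sum_nonneg)

lemma l1_dist_eq_0_iff [simp]: "l1_dist x y = 0 \<longleftrightarrow> x = y"
  by (simp add: l1_dist_def sum_nonneg_eq_0_iff vec_eq_iff)

lemma l1_dist_self [simp]: "l1_dist x x = 0"
  by simp

lemma l1_dist_shift [simp]: "l1_dist (x + c) (y + c) = l1_dist x y"
  by (simp add: l1_dist_def)

lemma abs_component_le_l1_dist: "\<bar>x$\<mu> - y$\<mu>\<bar> \<le> l1_dist x y"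
  unfolding l1_dist_def by (rule member_le_sum) auto

lemma l1_dist_axis: "l1_dist (x + axis \<mu> 1) x = 1" "l1_dist (x - axis \<mu> 1) x = 1"
  by (simp_all add: l1_dist_def axis_def)

lemma l1_dist_step:
  assumes "x$\<mu> \<noteq> y$\<mu>"
  shows "l1_dist (x + of_int (sgn (y$\<mu> - x$\<mu>)) * axis \<mu> 1) y = l1_dist x y - 1"
proof -
  let ?x' = "x + of_int (sgn (y$\<mu> - x$\<mu>)) * axis \<mu> 1"
  have "\<bar>?x'$\<nu> - y$\<nu>\<bar> = \<bar>x$\<nu> - y$\<nu>\<bar> - (if \<nu> = \<mu> then 1 else 0)" for \<nu>
    using assms by (cases "\<nu> = \<mu>") (auto simp: axis_def sgn_if)
  then show ?thesis
    by (simp add: l1_dist_def sum_subtractf)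
qed

lemma finite_box: "(\<And>\<mu>. finite (A \<mu>)) \<Longrightarrow> finite {x::'a^'d. \<forall>\<mu>. x$\<mu> \<in> A \<mu>}"
proof -
  assume "\<And>\<mu>. finite (A \<mu>)"
  then have "finite (vec_lambda ` PiE UNIV A)" by (intro finite_imageI finite_PiE) auto
  moreover have "{x::'a^'d. \<forall>\<mu>. x$\<mu> \<in> A \<mu>} \<subseteq> vec_lambda ` PiE UNIV A"
    by (auto intro!: image_eqI[of _ _ "vec_nth _"])
  ultimately show ?thesis by (rule finite_subset[rotated])
qed

lemma finite_l1_ball: "finite {x. l1_dist x y \<le> r}" "finite {x. l1_dist y x \<le> r}"
proof -
  show *: "finite {x. l1_dist x y \<le> r}" for y
  proof (rule finite_subset)
    show "{x. l1_dist x y \<le> r} \<subseteq> {x. \<forall>\<mu>. x$\<mu> \<in> {y$\<mu> - r .. y$\<mu> + r}}"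
    proof safe
      fix x \<mu> assume "l1_dist x y \<le> r"
      then show "x$\<mu> \<in> {y$\<mu> - r .. y$\<mu> + r}"
        using abs_component_le_l1_dist[of x \<mu> y] by (simp add: abs_le_iff)
    qed
  qed (intro finite_box, simp)
  then show "finite {x. l1_dist y x \<le> r}" by (simp add: l1_dist_commute[of y])
qed

lemma finite_Union_l1_balls: "finite S \<Longrightarrow> finite (\<Union>y\<in>S. {x. l1_dist y x \<le> r})"
  by (simp add: finite_l1_ball)

section \<open>Local linear operators\<close>

locale local_linear_operator =
  fixes A :: "(int^'d \<Rightarrow> real) \<Rightarrow> int^'d \<Rightarrow> real" and R :: int
  assumes range_pos: "0 < R"
    and local: "(\<And>y. l1_dist y x \<le> R \<Longrightarrow> f y = g y) \<Longrightarrow> A f x = A g x"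
    and additive: "A (\<lambda>y. f y + g y) x = A f x + A g x"
    and homogeneous: "A (\<lambda>y. c * f y) x = c * A f x"
begin

abbreviation nbhd :: "int^'d \<Rightarrow> (int^'d) set" where
  "nbhd x \<equiv> {y. l1_dist y x \<le> R}"

lemma A_zero: "A (\<lambda>_. 0) x = 0"
  using homogeneous[of 0 "\<lambda>_. 0" x] by simp

lemma A_diff: "A (\<lambda>y. f y - g y) x = A f x - A g x"
  using additive[of f "\<lambda>y. (-1) * g y" x] homogeneous[of "-1" g x] by simp

lemma A_sum: "finite I \<Longrightarrow> A (\<lambda>y. \<Sum>i\<in>I. F i y) x = (\<Sum>i\<in>I. A (F i) x)"
  by (induction I rule: finite_induct) (simp_all add: A_zero additive)

lemma A_kernel_expansion: "A f x = (\<Sum>y\<in>nbhd x. f y * A (indicator {y}) x)"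
proof -
  have ind: "f y * indicator {y} z = (if y = z then f y else 0)" for y z
    by (simp add: indicator_def)
  have "A f x = A (\<lambda>z. \<Sum>y\<in>nbhd x. f y * indicator {y} z) x"
    by (intro local) (simp add: ind finite_l1_ball)
  also have "\<dots> = (\<Sum>y\<in>nbhd x. f y * A (indicator {y}) x)"
    by (simp only: A_sum[OF finite_l1_ball(1)] homogeneous)
  finally show ?thesis .
qed

lemma A_support:
  assumes "A f x \<noteq> 0" shows "\<exists>y. l1_dist y x \<le> R \<and> f y \<noteq> 0"
proof -
  obtain y where "y \<in> nbhd x" "f y * A (indicator {y}) x \<noteq> 0"
    using assms unfolding A_kernel_expansion[of f x] by (rule sum.not_neutral_contains_not_neutral)
  then show ?thesis by auto
qed

lemma finsupp_A: "finsupp f \<Longrightarrow> finsupp (A f)"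
  by (rule finite_subset[OF _ finite_Union_l1_balls[of "{y. f y \<noteq> 0}" R]]) (auto dest: A_support)

lemma A_tendsto:
  assumes "\<And>y. (\<lambda>j. F j y) \<longlonglongrightarrow> f y"
  shows "(\<lambda>j. A (F j) x) \<longlonglongrightarrow> A f x"
proof -
  have "(\<lambda>j. \<Sum>y\<in>nbhd x. F j y * A (indicator {y}) x) \<longlonglongrightarrow> (\<Sum>y\<in>nbhd x. f y * A (indicator {y}) x)"
    by (intro tendsto_sum tendsto_mult_right assms)
  then show ?thesis
    by (simp only: A_kernel_expansion[of f x] A_kernel_expansion[of "F _" x])
qed

lemma card_nbhd: "card (nbhd x) = card (nbhd 0)"
proof -
  have shift: "l1_dist (y + x) x = l1_dist y 0" for y
    using l1_dist_shift[of y x 0] by simp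
  have "nbhd x = (\<lambda>y. y + x) ` nbhd 0"
  proof safe
    fix y assume "l1_dist y x \<le> R"
    then show "y \<in> (\<lambda>y. y + x) ` nbhd 0"
      using shift[of "y - x"] by (intro image_eqI[of _ _ "y - x"]) auto
  qed (simp add: shift)
  then show ?thesis by (simp add: card_image)
qed

lemma Sum_any_nbhd_swap:
  assumes "finsupp f"
  shows "(\<Sum>x. \<Sum>y\<in>nbhd x. f y) = real (card (nbhd 0)) * Sum_any f"
proof -
  let ?S = "{y. f y \<noteq> 0}"
  have "(\<Sum>x. \<Sum>y\<in>nbhd x. f y) = (\<Sum>x. \<Sum>y. if l1_dist y x \<le> R then f y else 0)"
    by (simp only: Sum_any.conditionalize[OF finite_l1_ball(1)] mem_Collect_eq)
  also have "\<dots> = (\<Sum>y. \<Sum>x. if l1_dist y x \<le> R then f y else 0)"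
  proof (rule Sum_any.swap)
    show "finite ((\<Union>y\<in>?S. {x. l1_dist y x \<le> R}) \<times> ?S)"
      using assms by (simp add: finite_l1_ball)
  qed (auto split: if_splits)
  also have "\<dots> = (\<Sum>y. real (card (nbhd 0)) * f y)"
  proof (rule Sum_any.cong)
    fix y
    have "(\<Sum>x. if l1_dist y x \<le> R then f y else 0) = (\<Sum>x\<in>nbhd y. f y)"
      by (simp only: Sum_any.conditionalize[OF finite_l1_ball(1)] mem_Collect_eq l1_dist_commute[of y])
    then show "(\<Sum>x. if l1_dist y x \<le> R then f y else 0) = real (card (nbhd 0)) * f y"
      using card_nbhd[of y] by simp
  qed
  finally show ?thesis using assms by (simp add: Sum_any_cmult)
qed

lemma A_norm_bound:
  assumes kernel: "\<And>x y. \<bar>A (indicator {y}) x\<bar> \<le> B" and f: "finsupp f"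
  shows "(\<Sum>x. (A f x)\<^sup>2) \<le> (B * card (nbhd 0))\<^sup>2 * (\<Sum>x. (f x)\<^sup>2)"
proof -
  define V where "V = real (card (nbhd 0))"
  have pointwise: "(A f x)\<^sup>2 \<le> B\<^sup>2 * V * (\<Sum>y\<in>nbhd x. (f y)\<^sup>2)" for x
  proof -
    have "(A f x)\<^sup>2 \<le> (\<Sum>y\<in>nbhd x. (f y * A (indicator {y}) x)\<^sup>2) * V"
      unfolding A_kernel_expansion[of f x] V_def card_nbhd[of x, symmetric]
      by (rule sum_squared_le_sum_of_squares)
    also have "\<dots> \<le> (\<Sum>y\<in>nbhd x. B\<^sup>2 * (f y)\<^sup>2) * V"
    proof (intro mult_right_mono sum_mono)
      fix y
      have "(A (indicator {y}) x)\<^sup>2 \<le> B\<^sup>2"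
        using kernel[of y x] by (simp add: abs_le_square_iff[symmetric] abs_le_iff)
      then show "(f y * A (indicator {y}) x)\<^sup>2 \<le> B\<^sup>2 * (f y)\<^sup>2"
        by (simp add: power_mult_distrib mult.commute[of "(f y)\<^sup>2"] mult_right_mono)
    qed (simp add: V_def)
    finally show ?thesis by (simp add: sum_distrib_left mult_ac)
  qed
  have supp: "finsupp (\<lambda>x. \<Sum>y\<in>nbhd x. (f y)\<^sup>2)"
  proof (rule finite_subset[OF _ finite_Union_l1_balls[OF f]])
    show "{x. (\<Sum>y\<in>nbhd x. (f y)\<^sup>2) \<noteq> 0} \<subseteq> (\<Union>y\<in>{y. f y \<noteq> 0}. {x. l1_dist y x \<le> R})"
    proof
      fix x assume "x \<in> {x. (\<Sum>y\<in>nbhd x. (f y)\<^sup>2) \<noteq> 0}"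
      then obtain y where "y \<in> nbhd x" "(f y)\<^sup>2 \<noteq> 0"
        by (meson mem_Collect_eq sum.not_neutral_contains_not_neutral)
      then show "x \<in> (\<Union>y\<in>{y. f y \<noteq> 0}. {x. l1_dist y x \<le> R})" by auto
    qed
  qed
  have "(\<Sum>x. (A f x)\<^sup>2) \<le> (\<Sum>x. B\<^sup>2 * V * (\<Sum>y\<in>nbhd x. (f y)\<^sup>2))"
    by (rule Sum_any_mono[OF finsupp_power2[OF finsupp_A[OF f]] finsupp_mult_right[OF supp] pointwise])
  also have "\<dots> = B\<^sup>2 * V * (V * (\<Sum>x. (f x)\<^sup>2))"
    by (simp only: Sum_any_cmult[OF supp] Sum_any_nbhd_swap[OF finsupp_power2[OF f]] V_def)
  finally show ?thesis by (simp add: V_def power2_eq_square mult_ac)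
qed

lemma relaxation_contracts:
  assumes \<gamma>: "0 < \<gamma>" and coerc: "\<gamma> * (\<Sum>x. (f x)\<^sup>2) \<le> (\<Sum>x. f x * A f x)"
    and K: "0 < K" and bounded: "(\<Sum>x. (A f x)\<^sup>2) \<le> K * (\<Sum>x. (f x)\<^sup>2)"
    and f: "finsupp f"
  shows "(\<Sum>x. (f x - \<gamma> / K * A f x)\<^sup>2) \<le> (1 - \<gamma>\<^sup>2 / K) * (\<Sum>x. (f x)\<^sup>2)"
proof -
  define S where "S = {x. f x \<noteq> 0} \<union> {x. A f x \<noteq> 0}"
  have S: "finite S" using f finsupp_A[OF f] by (simp add: S_def)
  have sums: "(\<Sum>x. (f x - \<gamma> / K * A f x)\<^sup>2) = (\<Sum>x\<in>S. (f x - \<gamma> / K * A f x)\<^sup>2)"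
    "(\<Sum>x. (f x)\<^sup>2) = (\<Sum>x\<in>S. (f x)\<^sup>2)" "(\<Sum>x. f x * A f x) = (\<Sum>x\<in>S. f x * A f x)"
    "(\<Sum>x. (A f x)\<^sup>2) = (\<Sum>x\<in>S. (A f x)\<^sup>2)"
    by (intro Sum_any.expand_superset[OF S]; auto simp: S_def)+
  have "(\<Sum>x\<in>S. (f x - \<gamma> / K * A f x)\<^sup>2)
      = (\<Sum>x\<in>S. (f x)\<^sup>2) - 2 * (\<gamma> / K) * (\<Sum>x\<in>S. f x * A f x) + (\<gamma> / K)\<^sup>2 * (\<Sum>x\<in>S. (A f x)\<^sup>2)"
    by (simp add: power2_eq_square algebra_simps sum.distrib sum_subtractf sum_distrib_left)
  also have "\<dots> \<le> (\<Sum>x\<in>S. (f x)\<^sup>2) - 2 * (\<gamma> / K) * (\<gamma> * (\<Sum>x\<in>S. (f x)\<^sup>2))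
                   + (\<gamma> / K)\<^sup>2 * (K * (\<Sum>x\<in>S. (f x)\<^sup>2))"
    using coerc bounded \<gamma> K by (intro add_mono diff_mono mult_left_mono) (simp_all add: sums)
  also have "\<dots> = (1 - \<gamma>\<^sup>2 / K) * (\<Sum>x\<in>S. (f x)\<^sup>2)"
    using K by (simp add: power2_eq_square field_simps)
  finally show ?thesis by (simp only: sums)
qed

end

section \<open>Green functions by Richardson iteration\<close>

locale symmetric_local_operator = local_linear_operator +
  assumes symmetric: "finsupp (\<phi> :: int^'d \<Rightarrow> real) \<Longrightarrow> (\<Sum>x. \<phi> x * A u x) = (\<Sum>x. A \<phi> x * u x)"

locale richardson_iteration = symmetric_local_operator +
  fixes \<epsilon> q :: real
  assumes step_pos: "0 < \<epsilon>" and rate_pos: "0 < q" and rate_less_1: "q < 1"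
    and contracting: "finsupp (f :: int^'d \<Rightarrow> real) \<Longrightarrow> (\<Sum>x. (f x - \<epsilon> * A f x)\<^sup>2) \<le> q * (\<Sum>x. (f x)\<^sup>2)"
begin

definition iterate :: "int^'d \<Rightarrow> nat \<Rightarrow> int^'d \<Rightarrow> real" where
  "iterate m j = ((\<lambda>f x. f x - \<epsilon> * A f x) ^^ j) (indicator {m})"

lemma iterate_0: "iterate m 0 = indicator {m}"
  by (simp add: iterate_def)

lemma iterate_Suc: "iterate m (Suc j) x = iterate m j x - \<epsilon> * A (iterate m j) x"
  by (simp add: iterate_def)

lemma iterate_support: "iterate m j x \<noteq> 0 \<Longrightarrow> l1_dist x m \<le> j * R"
proof (induction j arbitrary: x)
  case 0
  then show ?case by (simp add: iterate_0 indicator_def split: if_splits)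
next
  case (Suc j)
  show ?case
  proof (cases "iterate m j x = 0")
    case False
    then have "l1_dist x m \<le> j * R" by (rule Suc.IH)
    then show ?thesis using range_pos by (simp add: distrib_right)
  next
    case True
    then obtain y where y: "l1_dist y x \<le> R" "iterate m j y \<noteq> 0"
      using Suc.prems A_support by (fastforce simp: iterate_Suc)
    have "l1_dist x m \<le> l1_dist x y + l1_dist y m" by (rule l1_dist_triangle)
    then show ?thesis using y Suc.IH[OF y(2)] by (simp add: l1_dist_commute[of x] algebra_simps)
  qed
qed

lemma finsupp_iterate: "finsupp (iterate m j)"
  by (rule finite_subset[OF _ finite_l1_ball(1)[of m "j * R"]]) (auto dest: iterate_support)

lemma iterate_sqnorm: "(\<Sum>x. (iterate m j x)\<^sup>2) \<le> q ^ j"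
proof (induction j)
  case 0
  have "(\<Sum>x. (indicator {m} x)\<^sup>2) = (\<Sum>x. indicator {m} x * (1::real))"
    by (rule Sum_any.cong) (simp add: indicator_def)
  also have "\<dots> = 1" by (rule Sum_any_indicator_mult)
  finally show ?case by (simp add: iterate_0)
next
  case (Suc j)
  have "(\<Sum>x. (iterate m (Suc j) x)\<^sup>2) \<le> q * (\<Sum>x. (iterate m j x)\<^sup>2)"
    unfolding iterate_Suc by (rule contracting[OF finsupp_iterate])
  also have "\<dots> \<le> q * q ^ j" using Suc rate_pos by simp
  finally show ?case by simp
qed

lemma L2_set_iterate: "L2_set (iterate m j) S \<le> sqrt q ^ j"
proof (cases "finite S")
  case True
  have "(\<Sum>x\<in>S. (iterate m j x)\<^sup>2) \<le> (\<Sum>x. (iterate m j x)\<^sup>2)"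
    using True by (intro sum_le_Sum_any finsupp_power2 finsupp_iterate) auto
  also have "\<dots> \<le> q ^ j" by (rule iterate_sqnorm)
  finally show ?thesis by (simp add: L2_set_def real_sqrt_power[symmetric])
next
  case False
  then show ?thesis using rate_pos by simp
qed

lemma abs_iterate: "\<bar>iterate m j x\<bar> \<le> sqrt q ^ j"
  using L2_set_iterate[of m j "{x}"] by simp

lemma A_partial_sum:
  "A (\<lambda>y. \<epsilon> * (\<Sum>j<J. iterate m j y)) x = indicator {m} x - iterate m J x"
proof -
  have "A (\<lambda>y. \<epsilon> * (\<Sum>j<J. iterate m j y)) x = (\<Sum>j<J. \<epsilon> * A (iterate m j) x)"
    by (simp add: homogeneous A_sum sum_distrib_left)
  also have "\<dots> = (\<Sum>j<J. iterate m j x - iterate m (Suc j) x)"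
    by (simp add: iterate_Suc)
  also have "\<dots> = indicator {m} x - iterate m J x"
    using sum_lessThan_telescope'[of "\<lambda>j. iterate m j x" J] by (simp add: iterate_0)
  finally show ?thesis .
qed

lemma finsupp_partial_sum: "finsupp (\<lambda>y. \<epsilon> * (\<Sum>j<J. iterate m j y))"
  by (intro finsupp_mult_right finsupp_sum finsupp_iterate) auto

definition green :: "int^'d \<Rightarrow> int^'d \<Rightarrow> real" where
  "green m x = \<epsilon> * suminf (\<lambda>j. iterate m j x)"

lemma summable_iterate: "summable (\<lambda>j. iterate m j x)"
  by (rule summable_comparison_test[OF _ summable_geometric[of "sqrt q"]])
    (use abs_iterate rate_pos rate_less_1 in auto)

lemma partial_sum_tendsto_green: "(\<lambda>J. \<epsilon> * (\<Sum>j<J. iterate m j x)) \<longlonglongrightarrow> green m x"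
  unfolding green_def by (intro tendsto_mult_left summable_LIMSEQ summable_iterate)

lemma iterate_tendsto_0: "(\<lambda>J. iterate m J x) \<longlonglongrightarrow> 0"
proof (rule Lim_null_comparison)
  show "\<forall>\<^sub>F J in sequentially. norm (iterate m J x) \<le> sqrt q ^ J"
    using abs_iterate by simp
  show "(\<lambda>J. sqrt q ^ J) \<longlonglongrightarrow> 0"
    using rate_pos rate_less_1 by (intro LIMSEQ_power_zero) simp
qed

lemma A_green: "A (green m) = indicator {m}"
proof
  fix x
  have "(\<lambda>J. A (\<lambda>y. \<epsilon> * (\<Sum>j<J. iterate m j y)) x) \<longlonglongrightarrow> A (green m) x"
    by (intro A_tendsto partial_sum_tendsto_green)
  moreover have "(\<lambda>J. A (\<lambda>y. \<epsilon> * (\<Sum>j<J. iterate m j y)) x) \<longlonglongrightarrow> indicator {m} x - 0"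
    unfolding A_partial_sum by (intro tendsto_diff tendsto_const iterate_tendsto_0)
  ultimately show "A (green m) x = indicator {m} x"
    using LIMSEQ_unique by fastforce
qed

lemma green_decay:
  "\<bar>green m x\<bar> \<le> \<epsilon> / (1 - sqrt (sqrt q)) * exp (ln (sqrt (sqrt q)) / R * l1_dist x m)"
proof -
  define s where "s = sqrt (sqrt q)"
  define C where "C = exp (ln s / R * l1_dist x m)"
  have s: "0 < s" "s < 1" using rate_pos rate_less_1 by (simp_all add: s_def)
  \<comment> \<open>The \<open>j\<close>-th term vanishes unless \<open>j R \<ge> l1_dist x m\<close>, so half of its decay \<open>s\<^sup>2\<^sup>j\<close> pays for \<open>C\<close>.\<close>
  have bound: "\<bar>iterate m j x\<bar> \<le> C * s ^ j" for j
  proof (cases "iterate m j x = 0")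
    case True
    then show ?thesis using s by (simp add: C_def)
  next
    case False
    then have "l1_dist x m \<le> j * R" by (rule iterate_support)
    then have "real_of_int (l1_dist x m) \<le> real_of_int (int j * R)"
      by (simp only: of_int_le_iff)
    then have "l1_dist x m / R \<le> j" using range_pos by (simp add: divide_le_eq)
    then have "j * ln s \<le> ln s / R * l1_dist x m"
      using mult_right_mono_neg[of "l1_dist x m / R" j "ln s"] s by (simp add: mult.commute)
    moreover have "s ^ j = exp (j * ln s)"
      using s by (simp add: exp_of_nat_mult)
    ultimately have "s ^ j \<le> C"
      unfolding C_def by simp
    moreover have "\<bar>iterate m j x\<bar> \<le> s ^ j * s ^ j"
      using abs_iterate[of m j x] rate_pos by (simp add: s_def power_mult_distrib[symmetric])
    ultimately show ?thesis using s by (meson mult_right_mono order_trans zero_le_power less_imp_le)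
  qed
  have "summable (\<lambda>j. C * s ^ j)"
    using s by (intro summable_mult summable_geometric) simp
  then have "\<bar>suminf (\<lambda>j. iterate m j x)\<bar> \<le> suminf (\<lambda>j. C * s ^ j)"
    using norm_suminf_le[of "\<lambda>j. iterate m j x" "\<lambda>j. C * s ^ j"] bound by simp
  also have "\<dots> = C / (1 - s)"
    using s by (simp add: suminf_mult suminf_geometric summable_geometric)
  finally have "\<epsilon> * \<bar>suminf (\<lambda>j. iterate m j x)\<bar> \<le> \<epsilon> * (C / (1 - s))"
    using step_pos by (intro mult_left_mono) auto
  then show ?thesis
    using step_pos by (simp add: green_def abs_mult C_def s_def)
qed

lemma sq_summable_green: "sq_summable (green m)"
  unfolding sq_summable_def
proof (rule nonneg_bdd_above_summable_on)
  define B where "B = \<epsilon> / (1 - sqrt q)"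
  have partial: "(\<Sum>x\<in>F. (\<epsilon> * (\<Sum>j<J. iterate m j x))\<^sup>2) \<le> B\<^sup>2" if "finite F" for F J
  proof -
    have "L2_set (\<lambda>x. \<epsilon> * (\<Sum>j<J. iterate m j x)) F = \<epsilon> * L2_set (\<lambda>x. \<Sum>j<J. iterate m j x) F"
      using step_pos by (simp add: L2_set_right_distrib)
    also have "\<dots> \<le> \<epsilon> * (\<Sum>j<J. L2_set (iterate m j) F)"
      using step_pos by (intro mult_left_mono L2_set_sum_le) auto
    also have "\<dots> \<le> \<epsilon> * suminf (\<lambda>j. sqrt q ^ j)"
      using step_pos rate_pos rate_less_1
      by (intro mult_left_mono order_trans[OF sum_mono sum_le_suminf])
        (auto simp: L2_set_iterate summable_geometric)
    also have "\<dots> = B"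
      using rate_pos rate_less_1 by (simp add: B_def suminf_geometric)
    finally have "sqrt (\<Sum>x\<in>F. (\<epsilon> * (\<Sum>j<J. iterate m j x))\<^sup>2) \<le> B"
      unfolding L2_set_def .
    then have "(sqrt (\<Sum>x\<in>F. (\<epsilon> * (\<Sum>j<J. iterate m j x))\<^sup>2))\<^sup>2 \<le> B\<^sup>2"
      by (intro power_mono) (simp_all add: sum_nonneg)
    then show ?thesis by (simp add: sum_nonneg)
  qed
  show "bdd_above (sum (\<lambda>x. (green m x)\<^sup>2) ` {F. F \<subseteq> UNIV \<and> finite F})"
  proof (rule bdd_aboveI[of _ "B\<^sup>2"], clarify)
    fix F :: "(int^'d) set" assume "finite F"
    have "(\<lambda>J. \<Sum>x\<in>F. (\<epsilon> * (\<Sum>j<J. iterate m j x))\<^sup>2) \<longlonglongrightarrow> (\<Sum>x\<in>F. (green m x)\<^sup>2)"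
      by (intro tendsto_sum tendsto_power partial_sum_tendsto_green)
    then show "(\<Sum>x\<in>F. (green m x)\<^sup>2) \<le> B\<^sup>2"
      using partial[OF \<open>finite F\<close>] by (intro LIMSEQ_le_const2) auto
  qed
qed simp

text \<open>Symmetry moves \<open>A\<close> onto the finitely supported partial Neumann sum, which \<open>A\<close> maps
  to \<open>\<delta>\<^sub>p\<close> minus the \<open>J\<close>-th iterate.\<close>

lemma eval_eq_pairing_iterate:
  assumes "A w = (\<lambda>_. 0)"
  shows "w p = (\<Sum>x. iterate p J x * w x)"
proof -
  define P where "P = (\<lambda>x. \<epsilon> * (\<Sum>j<J. iterate p j x))"
  have "0 = (\<Sum>x. P x * A w x)" by (simp add: assms)
  also have "\<dots> = (\<Sum>x. A P x * w x)"
    unfolding P_def by (rule symmetric[OF finsupp_partial_sum])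
  also have "\<dots> = (\<Sum>x. indicator {p} x * w x - iterate p J x * w x)"
    by (simp add: P_def A_partial_sum left_diff_distrib)
  also have "\<dots> = (\<Sum>x. indicator {p} x * w x) - (\<Sum>x. iterate p J x * w x)"
    by (intro Sum_any_diff finsupp_mult_left finsupp_iterate finsupp_indicator) simp
  also have "\<dots> = w p - (\<Sum>x. iterate p J x * w x)"
    by (simp only: Sum_any_indicator_mult)
  finally show ?thesis by simp
qed

lemma sq_summable_null:
  assumes w: "sq_summable w" and Aw: "A w = (\<lambda>_. 0)"
  shows "w = (\<lambda>_. 0)"
proof
  fix p
  define S where "S = infsum (\<lambda>x. (w x)\<^sup>2) UNIV"
  have bound: "\<bar>w p\<bar> \<le> sqrt q ^ J * sqrt S" for J
  proof -
    define F where "F = {x. iterate p J x \<noteq> 0}"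
    have F: "finite F" unfolding F_def by (rule finsupp_iterate)
    have "w p = (\<Sum>x\<in>F. iterate p J x * w x)"
      unfolding eval_eq_pairing_iterate[OF Aw, of p J] using F
      by (intro Sum_any.expand_superset) (auto simp: F_def)
    then have "\<bar>w p\<bar> \<le> (\<Sum>x\<in>F. \<bar>iterate p J x\<bar> * \<bar>w x\<bar>)"
      by (simp add: sum_abs[THEN order_trans] abs_mult)
    also have "\<dots> \<le> L2_set (iterate p J) F * L2_set w F"
      by (rule L2_set_mult_ineq)
    also have "\<dots> \<le> sqrt q ^ J * sqrt S"
    proof (rule mult_mono)
      have "(\<Sum>x\<in>F. (w x)\<^sup>2) \<le> S"
        using w F unfolding S_def sq_summable_def by (intro finite_sum_le_infsum) auto
      then show "L2_set w F \<le> sqrt S" unfolding L2_set_def by simp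
      show "0 \<le> sqrt q ^ J" using rate_pos by simp
    qed (auto simp: L2_set_iterate)
    finally show ?thesis .
  qed
  have "(\<lambda>J. sqrt q ^ J * sqrt S) \<longlonglongrightarrow> 0 * sqrt S"
    using rate_pos rate_less_1 by (intro tendsto_mult_right LIMSEQ_power_zero) simp
  then have "\<bar>w p\<bar> \<le> 0" using bound by (intro LIMSEQ_le_const) auto
  then show "w p = 0" by simp
qed

end

lemma sq_summable_diff: "sq_summable u \<Longrightarrow> sq_summable v \<Longrightarrow> sq_summable (\<lambda>x. u x - v x)"
  unfolding sq_summable_def
proof (rule summable_on_comparison_test)
  assume "(\<lambda>x. (u x)\<^sup>2) summable_on UNIV" "(\<lambda>x. (v x)\<^sup>2) summable_on UNIV"
  then show "(\<lambda>x. 2 * (u x)\<^sup>2 + 2 * (v x)\<^sup>2) summable_on UNIV"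
    by (intro summable_on_add summable_on_cmult_right)
  show "(u x - v x)\<^sup>2 \<le> 2 * (u x)\<^sup>2 + 2 * (v x)\<^sup>2" for x
  proof -
    have "2 * (u x)\<^sup>2 + 2 * (v x)\<^sup>2 - (u x - v x)\<^sup>2 = (u x + v x)\<^sup>2"
      by (simp add: power2_eq_square algebra_simps)
    then show ?thesis using zero_le_power2[of "u x + v x"] by linarith
  qed
qed simp

lemma sq_summable_cmult: "sq_summable u \<Longrightarrow> sq_summable (\<lambda>x. c * u x)"
  unfolding sq_summable_def power_mult_distrib by (rule summable_on_cmult_right)

locale coercive_local_operator = symmetric_local_operator +
  assumes coercive:
      "\<exists>\<gamma>>0. \<forall>f :: int^'d \<Rightarrow> real. finsupp f \<longrightarrow> \<gamma> * (\<Sum>x. (f x)\<^sup>2) \<le> (\<Sum>x. f x * A f x)"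
    and kernel_bounded: "\<exists>B. \<forall>x y. \<bar>A (indicator {y}) x\<bar> \<le> B"
begin

lemma exists_richardson_iteration:
  obtains \<epsilon> q where "richardson_iteration A R \<epsilon> q"
proof -
  obtain \<gamma> where \<gamma>: "0 < \<gamma>"
    and coerc: "\<And>f. finsupp f \<Longrightarrow> \<gamma> * (\<Sum>x. (f x)\<^sup>2) \<le> (\<Sum>x. f x * A f x)"
    using coercive by blast
  obtain B where "\<And>x y. \<bar>A (indicator {y}) x\<bar> \<le> B"
    using kernel_bounded by blast
  then have bounded: "(\<Sum>x. (A f x)\<^sup>2) \<le> (B * card (nbhd 0))\<^sup>2 * (\<Sum>x. (f x)\<^sup>2)" if "finsupp f" for f
    using that by (rule A_norm_bound)
  \<comment> \<open>Enlarging the bound to \<open>2\<gamma>\<^sup>2\<close> keeps the contraction rate \<open>1 - \<gamma>\<^sup>2/K\<close> positive.\<close>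
  define K where "K = max ((B * card (nbhd 0))\<^sup>2) (2 * \<gamma>\<^sup>2)"
  have K: "2 * \<gamma>\<^sup>2 \<le> K" by (simp add: K_def)
  then have "0 < K" using \<gamma> by (smt (verit) zero_less_power)
  have "(\<Sum>x. (A f x)\<^sup>2) \<le> K * (\<Sum>x. (f x)\<^sup>2)" if "finsupp f" for f
    using bounded[OF that] by (rule order_trans) (intro mult_right_mono Sum_any_nonneg, simp_all add: K_def)
  then have "richardson_iteration A R (\<gamma> / K) (1 - \<gamma>\<^sup>2 / K)"
  proof unfold_locales
    show "0 < \<gamma> / K" "1 - \<gamma>\<^sup>2 / K < 1"
      using \<gamma> \<open>0 < K\<close> by simp_all
    have "\<gamma>\<^sup>2 / K \<le> 1 / 2" using K \<open>0 < K\<close> by (simp add: divide_simps)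
    then show "0 < 1 - \<gamma>\<^sup>2 / K" by linarith
  qed (use \<gamma> \<open>0 < K\<close> coerc in \<open>blast intro: relaxation_contracts\<close>)
  then show ?thesis by (rule that)
qed

theorem exists_decaying_green_function:
  obtains G and C c :: real
  where "\<And>m. sq_summable (G m)" "\<And>m. A (G m) = indicator {m}"
    and "0 < C" "0 < c" "\<And>m x. \<bar>G m x\<bar> \<le> C * exp (- c * l1_dist x m)"
proof -
  obtain \<epsilon> q where "richardson_iteration A R \<epsilon> q"
    by (rule exists_richardson_iteration)
  then interpret richardson_iteration A R \<epsilon> q .
  define s where "s = sqrt (sqrt q)"
  have s: "0 < s" "s < 1" using rate_pos rate_less_1 by (simp_all add: s_def)
  have "\<bar>green m x\<bar> \<le> \<epsilon> / (1 - s) * exp (- (- ln s / R) * l1_dist x m)" for m x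
    using green_decay[of m x] by (simp add: s_def)
  moreover have "0 < \<epsilon> / (1 - s)" using s step_pos by simp
  moreover have "0 < - ln s / R" using s range_pos by (intro divide_pos_pos) auto
  ultimately show ?thesis
    using sq_summable_green A_green that by blast
qed

theorem sq_summable_kernel_trivial:
  assumes "sq_summable w" "A w = (\<lambda>_. 0)"
  shows "w = (\<lambda>_. 0)"
proof -
  obtain \<epsilon> q where "richardson_iteration A R \<epsilon> q"
    by (rule exists_richardson_iteration)
  then interpret richardson_iteration A R \<epsilon> q .
  show ?thesis using assms by (rule sq_summable_null)
qed

lemma sq_summable_solution_unique:
  assumes "sq_summable u" "sq_summable v" "A u = A v"
  shows "u = v"
proof -
  have "A (\<lambda>x. u x - v x) = (\<lambda>_. 0)"
    using assms(3) by (simp add: A_diff fun_eq_iff)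
  with sq_summable_diff[OF assms(1,2)] have "(\<lambda>x. u x - v x) = (\<lambda>_. 0)"
    by (rule sq_summable_kernel_trivial)
  then show ?thesis by (simp add: fun_eq_iff)
qed

lemma the_sq_summable_solution:
  assumes "sq_summable g" "A g = f"
  shows "(THE g. sq_summable g \<and> A g = f) = g"
proof (rule the_equality)
  show "sq_summable h \<and> A h = f \<Longrightarrow> h = g" for h
    using assms by (metis sq_summable_solution_unique)
qed (use assms in simp)

end

section \<open>Block averages and the block Poincare inequality\<close>

lemma div_eq_iff_bounds: "0 < (N::int) \<Longrightarrow> n div N = y \<longleftrightarrow> N * y \<le> n \<and> n < N * y + N"
proof
  assume N: "0 < N" and y: "n div N = y"
  have "0 \<le> n mod N" "n mod N < N" using N by simp_all
  moreover have "N * y + n mod N = n" using mult_div_mod_eq[of N n] y by simp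
  ultimately show "N * y \<le> n \<and> n < N * y + N" by linarith
next
  assume N: "0 < N" and bounds: "N * y \<le> n \<and> n < N * y + N"
  then have "(n - N * y) div N = 0" by (intro div_pos_pos_trivial) auto
  then show "n div N = y"
    using N div_mult_self1[of N "n - N * y" y] by (simp add: algebra_simps)
qed

definition block_index :: "nat \<Rightarrow> int^'d \<Rightarrow> int^'d" where
  "block_index N x = (\<chi> \<mu>. x$\<mu> div int N)"

definition block_cell :: "nat \<Rightarrow> int^'d \<Rightarrow> (int^'d) set" where
  "block_cell N y = {x. block_index N x = y}"

lemma mem_block_cell_iff:
  "0 < N \<Longrightarrow> x \<in> block_cell N y \<longleftrightarrow> (\<forall>\<mu>. int N * y$\<mu> \<le> x$\<mu> \<and> x$\<mu> < int N * y$\<mu> + int N)"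
  by (simp add: block_cell_def block_index_def vec_eq_iff div_eq_iff_bounds)

lemma block_cell_index [simp]: "x \<in> block_cell N (block_index N x)"
  by (simp add: block_cell_def)

lemma block_index_cell: "x \<in> block_cell N y \<Longrightarrow> block_index N x = y"
  by (simp add: block_cell_def)

lemma block_cell_eq_box:
  assumes N: "0 < N"
  shows "block_cell N y = vec_lambda ` PiE UNIV (\<lambda>\<mu>. {int N * y$\<mu> ..< int N * y$\<mu> + int N})"
proof safe
  fix x assume "x \<in> block_cell N y"
  then show "x \<in> vec_lambda ` PiE UNIV (\<lambda>\<mu>. {int N * y$\<mu> ..< int N * y$\<mu> + int N})"
    by (intro image_eqI[of _ _ "vec_nth x"]) (auto simp: mem_block_cell_iff[OF N] PiE_iff)
qed (auto simp: mem_block_cell_iff[OF N] PiE_iff)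

lemma finite_block_cell: "0 < N \<Longrightarrow> finite (block_cell N y)"
  unfolding block_cell_eq_box by (intro finite_imageI finite_PiE) auto

lemma card_block_cell:
  assumes "0 < N"
  shows "card (block_cell N (y::int^'d)) = N ^ CARD('d)"
proof -
  have "inj_on (vec_lambda :: ('d \<Rightarrow> int) \<Rightarrow> int^'d) X" for X
    by (metis inj_onI vec_lambda_inverse UNIV_I)
  then show ?thesis using assms by (simp add: block_cell_eq_box card_image card_PiE)
qed

lemma l1_dist_block_cell:
  fixes x z :: "int^'d"
  assumes "0 < N" "x \<in> block_cell N y" "z \<in> block_cell N y"
  shows "l1_dist x z \<le> int (CARD('d) * N)"
proof -
  have "\<bar>x$\<mu> - z$\<mu>\<bar> \<le> int N" for \<mu>
    using assms by (simp add: mem_block_cell_iff abs_le_iff) (smt (verit))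
  then have "l1_dist x z \<le> (\<Sum>\<mu>\<in>(UNIV::'d set). int N)"
    unfolding l1_dist_def by (rule sum_mono)
  then show ?thesis by simp
qed

lemma finsupp_block_sums:
  "finsupp F \<Longrightarrow> finsupp (\<lambda>y. sum F (block_cell N y))"
  by (rule finite_subset[of _ "block_index N ` {x. F x \<noteq> 0}"])
    (auto elim!: sum.not_neutral_contains_not_neutral simp: block_cell_def)

lemma Sum_any_block_decomposition:
  assumes N: "0 < N" and F: "finsupp F"
  shows "Sum_any F = (\<Sum>y. sum F (block_cell N y))"
proof -
  define Y where "Y = block_index N ` {x. F x \<noteq> 0}"
  have Y: "finite Y" using F by (simp add: Y_def)
  have "Sum_any F = sum F (\<Union>y\<in>Y. block_cell N y)"
    by (rule Sum_any.expand_superset) (use Y N F in \<open>auto simp: Y_def finite_block_cell\<close>)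
  also have "\<dots> = (\<Sum>y\<in>Y. sum F (block_cell N y))"
    by (intro sum.UNION_disjoint Y ballI finite_block_cell[OF N]) (auto simp: block_cell_def)
  also have "\<dots> = (\<Sum>y. sum F (block_cell N y))"
    by (rule Sum_any.expand_superset[symmetric])
      (use Y in \<open>auto simp: Y_def block_cell_def elim!: sum.not_neutral_contains_not_neutral\<close>)
  finally show ?thesis .
qed

definition block_avg :: "nat \<Rightarrow> (int^'d \<Rightarrow> real) \<Rightarrow> int^'d \<Rightarrow> real" where
  "block_avg N f x = (\<Sum>z\<in>block_cell N (block_index N x). f z) / real N ^ CARD('d)"

lemma block_avg_add: "block_avg N (\<lambda>y. f y + g y) x = block_avg N f x + block_avg N g x"
  by (simp add: block_avg_def sum.distrib add_divide_distrib)

lemma block_avg_cmult: "block_avg N (\<lambda>y. c * f y) x = c * block_avg N f x"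
  by (simp add: block_avg_def sum_distrib_left)

lemma block_avg_on_cell:
  fixes y :: "int^'d"
  shows "x \<in> block_cell N y \<Longrightarrow> block_avg N f x = sum f (block_cell N y) / real N ^ CARD('d)"
  by (simp add: block_avg_def block_index_cell)

lemma sum_cell_mult_block_avg:
  fixes y :: "int^'d"
  shows "(\<Sum>x\<in>block_cell N y. \<phi> x * block_avg N u x)
     = sum \<phi> (block_cell N y) * sum u (block_cell N y) / real N ^ CARD('d)"
proof -
  have "(\<Sum>x\<in>block_cell N y. \<phi> x * block_avg N u x)
      = (\<Sum>x\<in>block_cell N y. \<phi> x * (sum u (block_cell N y) / real N ^ CARD('d)))"
    by (rule sum.cong) (simp_all add: block_avg_on_cell)
  also have "\<dots> = sum \<phi> (block_cell N y) * (sum u (block_cell N y) / real N ^ CARD('d))"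
    by (rule sum_distrib_right[symmetric])
  finally show ?thesis by simp
qed

lemma finsupp_block_avg:
  assumes N: "0 < N" and f: "finsupp f"
  shows "finsupp (block_avg N f)"
proof (rule finite_subset)
  show "{x. block_avg N f x \<noteq> 0} \<subseteq> (\<Union>z\<in>{z. f z \<noteq> 0}. block_cell N (block_index N z))"
  proof
    fix x assume "x \<in> {x. block_avg N f x \<noteq> 0}"
    then obtain z where "z \<in> block_cell N (block_index N x)" "f z \<noteq> 0"
      unfolding block_avg_def by (auto elim: sum.not_neutral_contains_not_neutral)
    then show "x \<in> (\<Union>z\<in>{z. f z \<noteq> 0}. block_cell N (block_index N z))"
      by (auto simp: block_cell_def)
  qed
qed (use N f in \<open>simp add: finite_block_cell\<close>)

lemma block_avg_symmetric:
  assumes N: "0 < N" and \<phi>: "finsupp \<phi>"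
  shows "(\<Sum>x. \<phi> x * block_avg N u x) = (\<Sum>x. block_avg N \<phi> x * u x)"
proof -
  have "(\<Sum>x. \<phi> x * block_avg N u x) = (\<Sum>y. \<Sum>x\<in>block_cell N y. \<phi> x * block_avg N u x)"
    using N \<phi> by (intro Sum_any_block_decomposition finsupp_mult_left)
  also have "\<dots> = (\<Sum>y. \<Sum>x\<in>block_cell N y. block_avg N \<phi> x * u x)"
    by (rule Sum_any.cong) (simp add: sum_cell_mult_block_avg mult.commute[of _ "u _"] mult.commute[of "sum u _"])
  also have "\<dots> = (\<Sum>x. block_avg N \<phi> x * u x)"
    using N finsupp_block_avg[OF N \<phi>] by (intro Sum_any_block_decomposition[symmetric] finsupp_mult_left)
  finally show ?thesis .
qed

lemma sum_mult_block_avg_self: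
  fixes f :: "int^'d \<Rightarrow> real"
  assumes N: "0 < N" and f: "finsupp f"
  shows "(\<Sum>x. f x * block_avg N f x) = (\<Sum>x. (block_avg N f x)\<^sup>2)"
proof -
  have cell: "(\<Sum>x\<in>block_cell N y. f x * block_avg N f x) = (\<Sum>x\<in>block_cell N y. (block_avg N f x)\<^sup>2)"
    for y :: "int^'d"
  proof -
    have "(\<Sum>x\<in>block_cell N y. (block_avg N f x)\<^sup>2)
        = (\<Sum>x\<in>block_cell N y. (sum f (block_cell N y) / real N ^ CARD('d))\<^sup>2)"
      by (rule sum.cong) (simp_all add: block_avg_on_cell)
    also have "\<dots> = sum f (block_cell N y) * sum f (block_cell N y) / real N ^ CARD('d)"
      using N by (simp add: card_block_cell power2_eq_square)
    finally show ?thesis by (simp add: sum_cell_mult_block_avg)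
  qed
  have "(\<Sum>x. f x * block_avg N f x) = (\<Sum>y. \<Sum>x\<in>block_cell N y. f x * block_avg N f x)"
    using N f by (intro Sum_any_block_decomposition finsupp_mult_left)
  also have "\<dots> = (\<Sum>y. \<Sum>x\<in>block_cell N y. (block_avg N f x)\<^sup>2)"
    by (simp only: cell)
  also have "\<dots> = (\<Sum>x. (block_avg N f x)\<^sup>2)"
    using N finsupp_block_avg[OF N f] by (intro Sum_any_block_decomposition[symmetric] finsupp_power2)
  finally show ?thesis .
qed

definition sq_grad :: "(int^'d \<Rightarrow> real) \<Rightarrow> int^'d \<Rightarrow> real" where
  "sq_grad f x = (\<Sum>\<mu>\<in>UNIV. (f (x + axis \<mu> 1) - f x)\<^sup>2)"

lemma sq_grad_nonneg: "0 \<le> sq_grad f x"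
  by (simp add: sq_grad_def sum_nonneg)

lemma finsupp_sq_grad: "finsupp f \<Longrightarrow> finsupp (sq_grad f)"
  unfolding sq_grad_def by (intro finsupp_sum finsupp_power2 finsupp_diff finsupp_shift) auto

lemma Sum_any_cell_sum:
  fixes h :: "int^'d \<Rightarrow> real"
  assumes N: "0 < N" and h: "finsupp h"
  shows "(\<Sum>x. \<Sum>z\<in>block_cell N (block_index N x). h z) = real N ^ CARD('d) * Sum_any h"
proof -
  define H where "H y = sum h (block_cell N y)" for y
  have H: "finsupp H" unfolding H_def using h by (rule finsupp_block_sums)
  have "finsupp (\<lambda>x. H (block_index N x))"
  proof (rule finite_subset)
    show "{x. H (block_index N x) \<noteq> 0} \<subseteq> (\<Union>y\<in>{y. H y \<noteq> 0}. block_cell N y)"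
      by (auto simp: block_cell_def)
  qed (use H N in \<open>simp add: finite_block_cell\<close>)
  then have "(\<Sum>x. H (block_index N x)) = (\<Sum>y. \<Sum>x\<in>block_cell N y. H (block_index N x))"
    by (rule Sum_any_block_decomposition[OF N])
  also have "\<dots> = (\<Sum>y. real N ^ CARD('d) * H y)"
    by (rule Sum_any.cong) (simp add: block_index_cell card_block_cell[OF N])
  also have "\<dots> = real N ^ CARD('d) * Sum_any h"
    using H by (simp add: Sum_any_cmult H_def Sum_any_block_decomposition[OF N h])
  finally show ?thesis by (simp add: H_def)
qed

lemma block_cell_between:
  assumes N: "0 < N" and "x \<in> block_cell N y" "z \<in> block_cell N y"
    and between: "\<And>\<mu>. x$\<mu> \<le> w$\<mu> \<and> w$\<mu> \<le> z$\<mu> \<or> z$\<mu> \<le> w$\<mu> \<and> w$\<mu> \<le> x$\<mu>"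
  shows "w \<in> block_cell N y"
  unfolding mem_block_cell_iff[OF N]
proof
  fix \<mu>
  show "int N * y$\<mu> \<le> w$\<mu> \<and> w$\<mu> < int N * y$\<mu> + int N"
    using assms(2,3) between[of \<mu>] unfolding mem_block_cell_iff[OF N] by (smt (verit))
qed

lemma block_cell_lipschitz:
  fixes f :: "int^'d \<Rightarrow> real" and s :: real
  assumes N: "0 < N"
    and step: "\<And>w \<mu>. w \<in> block_cell N y \<Longrightarrow> \<bar>f (w + axis \<mu> 1) - f w\<bar> \<le> s"
  shows "x \<in> block_cell N y \<Longrightarrow> z \<in> block_cell N y \<Longrightarrow> \<bar>f x - f z\<bar> \<le> l1_dist x z * s"
proof (induction "nat (l1_dist x z)" arbitrary: x)
  case 0
  then show ?case using l1_dist_nonneg[of x z] by simp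
next
  case (Suc k)
  then obtain \<mu> where \<mu>: "x$\<mu> \<noteq> z$\<mu>" by (metis l1_dist_self nat_0 nat.distinct(1) vec_eq_iff)
  define x' where "x' = x + of_int (sgn (z$\<mu> - x$\<mu>)) * axis \<mu> 1"
  have x': "x' \<in> block_cell N y"
    using \<mu> by (intro block_cell_between[OF N Suc.prems]) (auto simp: x'_def axis_def sgn_if)
  have dist: "l1_dist x' z = l1_dist x z - 1" unfolding x'_def using \<mu> by (rule l1_dist_step)
  then have "k = nat (l1_dist x' z)" using Suc.hyps(2) by simp
  then have IH: "\<bar>f x' - f z\<bar> \<le> l1_dist x' z * s" using Suc.hyps(1) x' Suc.prems(2) by blast
  have "\<bar>f x - f x'\<bar> \<le> s"
  proof (cases "x$\<mu> < z$\<mu>")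
    case True
    then have "x' = x + axis \<mu> 1" by (simp add: x'_def)
    then show ?thesis using step[OF Suc.prems(1)] by (simp add: abs_minus_commute)
  next
    case False
    then have "x = x' + axis \<mu> 1" using \<mu> by (simp add: x'_def vec_eq_iff axis_def)
    then show ?thesis using step[OF x'] by simp
  qed
  then show ?case using IH dist by (simp add: algebra_simps)
qed

lemma abs_sub_block_avg_le:
  fixes f :: "int^'d \<Rightarrow> real"
  assumes N: "0 < N" and near: "\<And>z. z \<in> block_cell N (block_index N x) \<Longrightarrow> \<bar>f x - f z\<bar> \<le> b"
  shows "\<bar>f x - block_avg N f x\<bar> \<le> b"
proof -
  define C where "C = block_cell N (block_index N x)"
  have C: "finite C" "card C = N ^ CARD('d)"
    using N by (simp_all add: C_def finite_block_cell card_block_cell)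
  have "f x - block_avg N f x = (\<Sum>z\<in>C. f x - f z) / real N ^ CARD('d)"
    using N C by (simp add: block_avg_def C_def sum_subtractf field_simps)
  moreover have "\<bar>\<Sum>z\<in>C. f x - f z\<bar> \<le> (\<Sum>z\<in>C. b)"
    using near by (intro order_trans[OF sum_abs sum_mono]) (simp add: C_def)
  ultimately have "\<bar>f x - block_avg N f x\<bar> \<le> (\<Sum>z\<in>C. b) / real N ^ CARD('d)"
    by (simp add: divide_right_mono)
  also have "\<dots> = b" using N C by simp
  finally show ?thesis .
qed

lemma block_poincare_pointwise:
  fixes f :: "int^'d \<Rightarrow> real"
  assumes N: "0 < N"
  shows "(f x - block_avg N f x)\<^sup>2
           \<le> (real (CARD('d) * N))\<^sup>2 * (\<Sum>z\<in>block_cell N (block_index N x). sq_grad f z)"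
proof -
  define C where "C = block_cell N (block_index N x)"
  define s where "s = sqrt (\<Sum>z\<in>C. sq_grad f z)"
  define r where "r = real (CARD('d) * N)"
  have C: "finite C" using N by (simp add: C_def finite_block_cell)
  have step: "\<bar>f (w + axis \<mu> 1) - f w\<bar> \<le> s" if "w \<in> C" for w \<mu>
  proof -
    have "(f (w + axis \<mu> 1) - f w)\<^sup>2 \<le> sq_grad f w"
      unfolding sq_grad_def by (rule member_le_sum) auto
    also have "\<dots> \<le> (\<Sum>z\<in>C. sq_grad f z)"
      using that C by (intro member_le_sum sq_grad_nonneg)
    finally show ?thesis unfolding s_def by (metis real_sqrt_abs real_sqrt_le_mono)
  qed
  have "\<bar>f x - f z\<bar> \<le> r * s" if "z \<in> C" for z
  proof -
    have "\<bar>f x - f z\<bar> \<le> l1_dist x z * s"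
      using block_cell_lipschitz[OF N step[unfolded C_def]] that by (simp add: C_def)
    also have "\<dots> \<le> r * s"
    proof (rule mult_right_mono)
      have "l1_dist x z \<le> int (CARD('d) * N)"
        using l1_dist_block_cell[OF N block_cell_index that[unfolded C_def]] .
      then show "real_of_int (l1_dist x z) \<le> r"
        unfolding r_def by (metis of_int_le_iff of_int_of_nat_eq)
      show "0 \<le> s" by (simp add: s_def sum_nonneg sq_grad_nonneg)
    qed
    finally show ?thesis .
  qed
  then have "\<bar>f x - block_avg N f x\<bar> \<le> r * s"
    using N by (intro abs_sub_block_avg_le) (auto simp: C_def)
  then have "(f x - block_avg N f x)\<^sup>2 \<le> (r * s)\<^sup>2"
    by (simp add: abs_le_square_iff[symmetric] r_def s_def abs_le_iff)
  then show ?thesis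
    by (simp add: power_mult_distrib s_def r_def C_def sum_nonneg sq_grad_nonneg)
qed

lemma block_poincare:
  fixes f :: "int^'d \<Rightarrow> real"
  assumes N: "0 < N" and f: "finsupp f"
  shows "(\<Sum>x. (f x - block_avg N f x)\<^sup>2)
           \<le> (real (CARD('d) * N))\<^sup>2 * real N ^ CARD('d) * (\<Sum>x. sq_grad f x)"
proof -
  have supp: "finsupp (\<lambda>x. \<Sum>z\<in>block_cell N (block_index N x). sq_grad f z)"
  proof (rule finite_subset)
    show "{x. (\<Sum>z\<in>block_cell N (block_index N x). sq_grad f z) \<noteq> 0}
        \<subseteq> (\<Union>z\<in>{z. sq_grad f z \<noteq> 0}. block_cell N (block_index N z))"
      by (auto simp: block_cell_def elim!: sum.not_neutral_contains_not_neutral)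
  qed (use N finsupp_sq_grad[OF f] in \<open>simp add: finite_block_cell\<close>)
  have "(\<Sum>x. (f x - block_avg N f x)\<^sup>2)
      \<le> (\<Sum>x. (real (CARD('d) * N))\<^sup>2 * (\<Sum>z\<in>block_cell N (block_index N x). sq_grad f z))"
    using N f supp
    by (intro Sum_any_mono block_poincare_pointwise finsupp_power2 finsupp_diff finsupp_block_avg
        finsupp_mult_right)
  also have "\<dots> = (real (CARD('d) * N))\<^sup>2 * real N ^ CARD('d) * (\<Sum>x. sq_grad f x)"
    using N supp finsupp_sq_grad[OF f] by (simp add: Sum_any_cmult Sum_any_cell_sum)
  finally show ?thesis .
qed

lemma sum_sq_le_energy_plus_block_avg:
  fixes f :: "int^'d \<Rightarrow> real"
  assumes N: "0 < N" and f: "finsupp f"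
  shows "(\<Sum>x. (f x)\<^sup>2) \<le> (real (CARD('d) * N))\<^sup>2 * real N ^ CARD('d) * (\<Sum>x. sq_grad f x)
                           + 2 * (\<Sum>x. f x * block_avg N f x)"
proof -
  have avg: "finsupp (block_avg N f)" using N f by (rule finsupp_block_avg)
  have dev: "finsupp (\<lambda>x. (f x - block_avg N f x)\<^sup>2)"
    using f avg by (intro finsupp_power2 finsupp_diff)
  have cross: "finsupp (\<lambda>x. 2 * (f x * block_avg N f x))"
    using f by (intro finsupp_mult_right finsupp_mult_left)
  have pointwise: "(f x)\<^sup>2 \<le> (f x - block_avg N f x)\<^sup>2 + 2 * (f x * block_avg N f x)" for x
  proof -
    have "(f x - block_avg N f x)\<^sup>2 + 2 * (f x * block_avg N f x) = (f x)\<^sup>2 + (block_avg N f x)\<^sup>2"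
      by (simp add: power2_eq_square algebra_simps)
    then show ?thesis by simp
  qed
  have "(\<Sum>x. (f x)\<^sup>2) \<le> (\<Sum>x. (f x - block_avg N f x)\<^sup>2 + 2 * (f x * block_avg N f x))"
    by (rule Sum_any_mono[OF finsupp_power2[OF f] finsupp_add[OF dev cross] pointwise])
  also have "\<dots> = (\<Sum>x. (f x - block_avg N f x)\<^sup>2) + 2 * (\<Sum>x. f x * block_avg N f x)"
    using f by (simp add: Sum_any.distrib[OF dev cross] Sum_any_cmult finsupp_mult_left)
  finally show ?thesis
    using block_poincare[OF N f] by simp
qed

definition lattice_laplacian :: "(int^'d \<Rightarrow> real) \<Rightarrow> int^'d \<Rightarrow> real" where
  "lattice_laplacian f x = (\<Sum>\<mu>\<in>UNIV. f (x + axis \<mu> 1) - 2 * f x + f (x - axis \<mu> 1))"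

lemma lattice_laplacian_add:
  "lattice_laplacian (\<lambda>y. f y + g y) x = lattice_laplacian f x + lattice_laplacian g x"
  by (simp add: lattice_laplacian_def sum.distrib[symmetric] algebra_simps)

lemma lattice_laplacian_cmult: "lattice_laplacian (\<lambda>y. c * f y) x = c * lattice_laplacian f x"
  by (simp add: lattice_laplacian_def sum_distrib_left algebra_simps)

lemma finsupp_lattice_laplacian: "finsupp f \<Longrightarrow> finsupp (lattice_laplacian f)"
  unfolding lattice_laplacian_def
  by (intro finsupp_sum finsupp_add finsupp_diff finsupp_shift finsupp_mult_right)
    (simp_all add: finsupp_shift[of f "- axis _ 1", simplified])

lemma lattice_laplacian_symmetric:
  assumes \<phi>: "finsupp \<phi>"
  shows "(\<Sum>x. \<phi> x * lattice_laplacian u x) = (\<Sum>x. lattice_laplacian \<phi> x * u x)"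
proof -
  define H where "H \<mu> x = \<phi> (x - axis \<mu> 1) * u x - \<phi> x * u (x - axis \<mu> 1)" for \<mu> x
  have H: "finsupp (H \<mu>)" for \<mu>
    unfolding H_def using \<phi> finsupp_shift[OF \<phi>, of "- axis \<mu> 1"]
    by (intro finsupp_diff finsupp_mult_left) simp_all
  have "\<phi> x * lattice_laplacian u x - lattice_laplacian \<phi> x * u x
      = (\<Sum>\<mu>\<in>UNIV. H \<mu> (x + axis \<mu> 1) - H \<mu> x)" for x
    by (simp add: lattice_laplacian_def H_def sum_distrib_left sum_distrib_right
        flip: sum_subtractf) (simp add: algebra_simps)
  then have "(\<Sum>x. \<phi> x * lattice_laplacian u x - lattice_laplacian \<phi> x * u x) = 0"
    using H Sum_any_telescoping[of UNIV H "\<lambda>\<mu>. axis \<mu> 1"] by simp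
  then show ?thesis
    using \<phi> finsupp_lattice_laplacian[OF \<phi>]
    by (simp add: Sum_any_diff finsupp_mult_left)
qed

lemma sum_mult_lattice_laplacian_self:
  assumes f: "finsupp f"
  shows "(\<Sum>x. f x * lattice_laplacian f x) = - (\<Sum>x. sq_grad f x)"
proof -
  define H where "H \<mu> x = (f x)\<^sup>2 - f x * f (x - axis \<mu> 1)" for \<mu> x
  have H: "finsupp (H \<mu>)" for \<mu>
    unfolding H_def using f by (intro finsupp_diff finsupp_mult_left finsupp_power2)
  have "f x * lattice_laplacian f x + sq_grad f x = (\<Sum>\<mu>\<in>UNIV. H \<mu> (x + axis \<mu> 1) - H \<mu> x)" for x
    by (simp add: lattice_laplacian_def sq_grad_def H_def sum_distrib_left
        flip: sum.distrib) (simp add: power2_eq_square algebra_simps)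
  then have "(\<Sum>x. f x * lattice_laplacian f x + sq_grad f x) = 0"
    using H Sum_any_telescoping[of UNIV H "\<lambda>\<mu>. axis \<mu> 1"] by simp
  then show ?thesis
    using f finsupp_sq_grad[OF f] by (simp add: Sum_any.distrib finsupp_mult_left)
qed

definition block_op :: "nat \<Rightarrow> real \<Rightarrow> real \<Rightarrow> (int^'d \<Rightarrow> real) \<Rightarrow> int^'d \<Rightarrow> real" where
  "block_op N M \<alpha> f x = - (real N)\<^sup>2 * lattice_laplacian f x + M * f x + \<alpha> * block_avg N f x"

lemma block_op_local_linear:
  assumes N: "0 < N"
  shows "local_linear_operator (block_op N M \<alpha> :: (int^'d \<Rightarrow> real) \<Rightarrow> _) (int (CARD('d) * N))"
proof unfold_locales
  show "0 < int (CARD('d) * N)" using N by simp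
next
  fix f g :: "int^'d \<Rightarrow> real" and x
  assume eq: "\<And>y. l1_dist y x \<le> int (CARD('d) * N) \<Longrightarrow> f y = g y"
  have "0 < CARD('d) * N" using N by simp
  then have "1 \<le> int (CARD('d) * N)" by linarith
  then have "lattice_laplacian f x = lattice_laplacian g x"
    unfolding lattice_laplacian_def using eq l1_dist_axis[of x] by simp
  moreover have "block_avg N f x = block_avg N g x"
    unfolding block_avg_def
    using eq l1_dist_block_cell[OF N _ block_cell_index[of x N]] by (simp cong: sum.cong)
  ultimately show "block_op N M \<alpha> f x = block_op N M \<alpha> g x"
    using eq[of x] by (simp add: block_op_def)
qed (simp_all add: block_op_def lattice_laplacian_add lattice_laplacian_cmult block_avg_add
      block_avg_cmult algebra_simps)

lemma block_op_kernel_bound: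
  fixes x y :: "int^'d"
  assumes N: "0 < N"
  shows "\<bar>block_op N M \<alpha> (indicator {y}) x\<bar> \<le> (real N)\<^sup>2 * (4 * CARD('d)) + \<bar>M\<bar> + \<bar>\<alpha>\<bar>"
proof -
  let ?\<delta> = "indicator {y} :: int^'d \<Rightarrow> real"
  have \<delta>: "0 \<le> ?\<delta> z" "?\<delta> z \<le> 1" for z by (simp_all add: indicator_def)
  have "\<bar>lattice_laplacian ?\<delta> x\<bar> \<le> (\<Sum>\<mu>\<in>(UNIV::'d set). 4)"
    unfolding lattice_laplacian_def
  proof (rule order_trans[OF sum_abs sum_mono])
    fix \<mu>
    show "\<bar>?\<delta> (x + axis \<mu> 1) - 2 * ?\<delta> x + ?\<delta> (x - axis \<mu> 1)\<bar> \<le> 4"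
      using \<delta>[of x] \<delta>[of "x + axis \<mu> 1"] \<delta>[of "x - axis \<mu> 1"] by (simp only: abs_le_iff) linarith
  qed
  moreover have "\<bar>block_avg N ?\<delta> x\<bar> \<le> 1"
  proof -
    have "(\<Sum>z\<in>block_cell N (block_index N x). ?\<delta> z) \<le> 1"
      using N card_mono[of "{y}" "block_cell N (block_index N x) \<inter> {y}"]
      by (simp add: indicator_def finite_block_cell)
    moreover have "1 \<le> real N ^ CARD('d)" using N by simp
    ultimately show ?thesis using \<delta> by (simp add: block_avg_def sum_nonneg divide_le_eq)
  qed
  ultimately have "\<bar>- (real N)\<^sup>2 * lattice_laplacian ?\<delta> x\<bar> \<le> (real N)\<^sup>2 * (4 * CARD('d))"
    "\<bar>M * ?\<delta> x\<bar> \<le> \<bar>M\<bar>" "\<bar>\<alpha> * block_avg N ?\<delta> x\<bar> \<le> \<bar>\<alpha>\<bar>"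
    using \<delta> by (auto simp: abs_mult mult_left_le intro: mult_left_mono)
  then show ?thesis unfolding block_op_def by linarith
qed

lemma block_op_symmetric:
  assumes N: "0 < N" and \<phi>: "finsupp \<phi>"
  shows "(\<Sum>x. \<phi> x * block_op N M \<alpha> u x) = (\<Sum>x. block_op N M \<alpha> \<phi> x * u x)"
proof -
  have "(\<Sum>x. \<phi> x * block_op N M \<alpha> u x)
      = Sum_any (\<lambda>x. - (real N)\<^sup>2 * (\<phi> x * lattice_laplacian u x) + M * (\<phi> x * u x)
                     + \<alpha> * (\<phi> x * block_avg N u x))"
    by (simp add: block_op_def algebra_simps)
  also have "\<dots> = - (real N)\<^sup>2 * (\<Sum>x. \<phi> x * lattice_laplacian u x) + M * (\<Sum>x. \<phi> x * u x)
                     + \<alpha> * (\<Sum>x. \<phi> x * block_avg N u x)"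
    using \<phi> by (intro Sum_any_lincomb3 finsupp_mult_left)
  also have "\<dots> = - (real N)\<^sup>2 * (\<Sum>x. lattice_laplacian \<phi> x * u x) + M * (\<Sum>x. \<phi> x * u x)
                     + \<alpha> * (\<Sum>x. block_avg N \<phi> x * u x)"
    using N \<phi> by (simp add: lattice_laplacian_symmetric block_avg_symmetric)
  also have "\<dots> = Sum_any (\<lambda>x. - (real N)\<^sup>2 * (lattice_laplacian \<phi> x * u x) + M * (\<phi> x * u x)
                     + \<alpha> * (block_avg N \<phi> x * u x))"
    using N \<phi> by (intro Sum_any_lincomb3[symmetric] finsupp_mult_left finsupp_lattice_laplacian
        finsupp_block_avg)
  also have "\<dots> = (\<Sum>x. block_op N M \<alpha> \<phi> x * u x)"
    by (simp add: block_op_def algebra_simps)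
  finally show ?thesis .
qed

lemma block_op_quadratic_form:
  assumes N: "0 < N" and f: "finsupp f"
  shows "(\<Sum>x. f x * block_op N M \<alpha> f x)
           = (real N)\<^sup>2 * (\<Sum>x. sq_grad f x) + M * (\<Sum>x. (f x)\<^sup>2) + \<alpha> * (\<Sum>x. f x * block_avg N f x)"
proof -
  have "(\<Sum>x. f x * block_op N M \<alpha> f x)
      = Sum_any (\<lambda>x. - (real N)\<^sup>2 * (f x * lattice_laplacian f x) + M * (f x)\<^sup>2
                     + \<alpha> * (f x * block_avg N f x))"
    by (simp add: block_op_def power2_eq_square algebra_simps)
  also have "\<dots> = - (real N)\<^sup>2 * (\<Sum>x. f x * lattice_laplacian f x) + M * (\<Sum>x. (f x)\<^sup>2)
                     + \<alpha> * (\<Sum>x. f x * block_avg N f x)"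
    using f by (intro Sum_any_lincomb3 finsupp_mult_left finsupp_power2)
  finally show ?thesis using f by (simp add: sum_mult_lattice_laplacian_self)
qed

lemma block_op_coercive:
  fixes M \<alpha> :: real
  assumes N: "0 < N" and M: "0 \<le> M" and \<alpha>: "0 < \<alpha>"
  shows "\<exists>\<gamma>>0. \<forall>f :: int^'d \<Rightarrow> real. finsupp f \<longrightarrow>
           \<gamma> * (\<Sum>x. (f x)\<^sup>2) \<le> (\<Sum>x. f x * block_op N M \<alpha> f x)"
proof -
  define C where "C = (real (CARD('d) * N))\<^sup>2 * real N ^ CARD('d)"
  define c where "c = max (C / (real N)\<^sup>2) (2 / \<alpha>)"
  have c1: "C / (real N)\<^sup>2 \<le> c" and c2: "2 / \<alpha> \<le> c" by (simp_all add: c_def)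
  have "0 < 2 / \<alpha>" using \<alpha> by simp
  then have c: "0 < c" "C \<le> c * (real N)\<^sup>2" "2 \<le> c * \<alpha>"
    using c1 c2 N \<alpha> by (linarith, simp_all add: pos_divide_le_eq)
  have "(\<Sum>x. (f x)\<^sup>2) \<le> c * (\<Sum>x. f x * block_op N M \<alpha> f x)"
    if f: "finsupp f" for f :: "int^'d \<Rightarrow> real"
  proof -
    define E where "E = (\<Sum>x. sq_grad f x)"
    define P where "P = (\<Sum>x. f x * block_avg N f x)"
    have E: "0 \<le> E" unfolding E_def by (intro Sum_any_nonneg sq_grad_nonneg)
    have P: "0 \<le> P" unfolding P_def sum_mult_block_avg_self[OF N f] by (intro Sum_any_nonneg) simp
    have "(\<Sum>x. (f x)\<^sup>2) \<le> C * E + 2 * P"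
      using sum_sq_le_energy_plus_block_avg[OF N f] by (simp add: C_def E_def P_def)
    also have "\<dots> \<le> c * ((real N)\<^sup>2 * E + \<alpha> * P)"
    proof -
      have "C * E \<le> c * (real N)\<^sup>2 * E" "2 * P \<le> c * \<alpha> * P"
        using c E P by (simp_all add: mult_right_mono)
      then show ?thesis by (simp add: distrib_left mult.assoc)
    qed
    also have "\<dots> \<le> c * (\<Sum>x. f x * block_op N M \<alpha> f x)"
    proof -
      have "0 \<le> M * (\<Sum>x. (f x)\<^sup>2)" using M by (simp add: Sum_any_nonneg)
      then show ?thesis
        using c by (simp add: block_op_quadratic_form[OF N f] E_def P_def)
    qed
    finally show ?thesis .
  qed
  note key = this
  show ?thesis
  proof (intro exI[of _ "1 / c"] conjI allI impI)
    show "0 < 1 / c" using c by simp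
    fix f :: "int^'d \<Rightarrow> real" assume "finsupp f"
    then show "1 / c * (\<Sum>x. (f x)\<^sup>2) \<le> (\<Sum>x. f x * block_op N M \<alpha> f x)"
      using key c by (simp add: pos_divide_le_eq mult.commute)
  qed
qed

lemma block_op_coercive_local:
  fixes M \<alpha> :: real
  assumes N: "0 < N" and M: "0 \<le> M" and \<alpha>: "0 < \<alpha>"
  shows "coercive_local_operator (block_op N M \<alpha> :: (int^'d \<Rightarrow> real) \<Rightarrow> _) (int (CARD('d) * N))"
proof (intro coercive_local_operator.intro symmetric_local_operator.intro
    coercive_local_operator_axioms.intro symmetric_local_operator_axioms.intro)
  show "local_linear_operator (block_op N M \<alpha> :: (int^'d \<Rightarrow> real) \<Rightarrow> _) (int (CARD('d) * N))"
    using N by (rule block_op_local_linear)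
  show "(\<Sum>x. \<phi> x * block_op N M \<alpha> u x) = (\<Sum>x. block_op N M \<alpha> \<phi> x * u x)"
    if "finsupp \<phi>" for \<phi> u :: "int^'d \<Rightarrow> real"
    using N that by (rule block_op_symmetric)
  show "\<exists>B. \<forall>x y. \<bar>block_op N M \<alpha> (indicator {y}) x\<bar> \<le> B"
    using block_op_kernel_bound[OF N] by blast
qed (rule block_op_coercive[OF N M \<alpha>])

lemma block_eq_block_cell:
  fixes y :: "int^'d"
  assumes "0 < L"
  shows "block L k y = block_cell (L ^ k) y"
proof -
  have N: "0 < real L ^ k" using assms by simp
  have "real_of_int (y$\<mu>) \<le> eta L k * real_of_int (x$\<mu>)
      \<longleftrightarrow> real_of_int (int (L ^ k) * y$\<mu>) \<le> real_of_int (x$\<mu>)"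
    and "eta L k * real_of_int (x$\<mu>) < real_of_int (y$\<mu>) + 1
      \<longleftrightarrow> real_of_int (x$\<mu>) < real_of_int (int (L ^ k) * y$\<mu> + int (L ^ k))"
    for x :: "int^'d" and \<mu>
    using N by (simp_all add: eta_def field_simps)
  then show ?thesis
    using assms by (auto simp: block_def mem_block_cell_iff simp del: of_int_mult of_int_add of_int_of_nat_eq)
qed

lemma Aop_eq_block_op:
  assumes "0 < L"
  shows "Aop L k a mu0 = block_op (L ^ k) (mu_k L k mu0) (a_k L k a)"
proof (intro ext)
  fix f :: "int^'d \<Rightarrow> real" and x
  have "Qk_adj L k (Qk L k f) x = block_avg (L ^ k) f x"
  proof -
    have "(THE y. x \<in> block L k y) = block_index (L ^ k) x"
      using assms by (intro the_equality) (auto simp: block_eq_block_cell block_cell_def)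
    then show ?thesis
      using assms by (simp add: Qk_adj_def Qk_def block_avg_def block_eq_block_cell power_mult
          power_one_over)
  qed
  then show "Aop L k a mu0 f x = block_op (L ^ k) (mu_k L k mu0) (a_k L k a) f x"
    by (simp add: Aop_def block_op_def lap_def lattice_laplacian_def eta_def power_one_over
        power_mult_distrib)
qed

lemma delta_eta_eq: "delta_eta (eta L k) m = (\<lambda>x. real (L ^ k) ^ CARD('d) * indicator {m} (x :: int^'d))"
  by (simp add: delta_eta_def eta_def indicator_def power_one_over fun_eq_iff)

lemma a_k_pos:
  assumes "1 < L" "1 \<le> k" "0 < a"
  shows "0 < a_k L k a"
proof -
  have "real L powi (- int j) < 1" if "1 \<le> j" for j
    using assms(1) that by (simp add: power_int_minus inverse_less_1_iff one_less_power)
  from this[of 2] this[of "2 * k"] show ?thesis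
    using assms by (simp add: a_k_def)
qed

lemma exp_l1_dist_le_exp_dist:
  fixes c :: real
  assumes N: "0 < N" and c: "0 \<le> c"
  shows "exp (- c * l1_dist n m) \<le> exp (- (c * N) * dist (lat_pt (1 / real N) n) (lat_pt (1 / real N) m))"
proof -
  have "dist (lat_pt (1 / real N) n) (lat_pt (1 / real N) m)
      \<le> (\<Sum>\<mu>\<in>UNIV. \<bar>(lat_pt (1 / real N) n - lat_pt (1 / real N) m) $ \<mu>\<bar>)"
    unfolding dist_norm by (rule norm_le_l1_cart)
  also have "\<dots> = l1_dist n m / real N"
    by (simp add: lat_pt_def l1_dist_def sum_divide_distrib abs_divide flip: diff_divide_distrib)
  finally have "real N * dist (lat_pt (1 / real N) n) (lat_pt (1 / real N) m) \<le> l1_dist n m"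
    using N by (simp add: field_simps)
  then show ?thesis
    using c by (simp add: mult.assoc mult_left_mono)
qed

lemma Aop_coercive_local:
  assumes "1 < L" "1 \<le> k" "0 < a" "0 \<le> mu0"
  shows "coercive_local_operator (Aop L k a mu0 :: (int^'d \<Rightarrow> real) \<Rightarrow> _) (int (CARD('d) * L ^ k))"
proof -
  have "0 < L ^ k" "0 \<le> mu_k L k mu0" "0 < a_k L k a"
    using assms by (simp_all add: mu_k_def a_k_pos)
  then have "coercive_local_operator (block_op (L ^ k) (mu_k L k mu0) (a_k L k a) :: (int^'d \<Rightarrow> real) \<Rightarrow> _)
      (int (CARD('d) * L ^ k))"
    by (rule block_op_coercive_local)
  moreover have "(Aop L k a mu0 :: (int^'d \<Rightarrow> real) \<Rightarrow> _) = block_op (L ^ k) (mu_k L k mu0) (a_k L k a)"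
    using assms by (intro Aop_eq_block_op) simp
  ultimately show ?thesis by simp
qed

lemma Gker_eq_scaled_solution:
  fixes g :: "int^'d \<Rightarrow> real"
  assumes "1 < L" "1 \<le> k" "0 < a" "0 \<le> mu0"
    and g: "sq_summable g" "Aop L k a mu0 g = indicator {m}"
  shows "Gker L k a mu0 n m = real (L ^ k) ^ CARD('d) * g n"
proof -
  interpret coercive_local_operator "Aop L k a mu0 :: (int^'d \<Rightarrow> real) \<Rightarrow> _" "int (CARD('d) * L ^ k)"
    using assms(1-4) by (rule Aop_coercive_local)
  have "Aop L k a mu0 (\<lambda>x. real (L ^ k) ^ CARD('d) * g x) = delta_eta (eta L k) m"
    by (simp add: homogeneous g(2) delta_eta_eq fun_eq_iff)
  with sq_summable_cmult[OF g(1)]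
  have "(THE g. sq_summable g \<and> Aop L k a mu0 g = delta_eta (eta L k) m) = (\<lambda>x. real (L ^ k) ^ CARD('d) * g x)"
    by (rule the_sq_summable_solution)
  then show ?thesis by (simp add: Gker_def)
qed

theorem mainTheorem13:
  fixes L k :: nat and a mu0 :: real
  assumes "odd L" and "L > 1" and "k \<ge> 1" and "0 < a" and "a \<le> 1" and "mu0 \<ge> 0"
  shows "\<exists>c c1. c > 0 \<and> c1 > 0 \<and>
           (\<forall>n m :: int^'d. \<bar>Gker L k a mu0 n m\<bar>
               \<le> c * exp (- c1 * dist (lat_pt (eta L k) n) (lat_pt (eta L k) m)))"
proof -
  define N where "N = L ^ k"
  have N: "0 < N" and eta: "eta L k = 1 / real N" using assms(2) by (simp_all add: N_def eta_def)
  interpret coercive_local_operator "Aop L k a mu0 :: (int^'d \<Rightarrow> real) \<Rightarrow> _" "int (CARD('d) * N)"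
    unfolding N_def using assms(2-4,6) by (rule Aop_coercive_local)
  obtain G :: "int^'d \<Rightarrow> int^'d \<Rightarrow> real" and C c :: real
    where G: "\<And>m. sq_summable (G m)" "\<And>m. Aop L k a mu0 (G m) = indicator {m}"
      and pos: "0 < C" "0 < c" and decay: "\<And>m x. \<bar>G m x\<bar> \<le> C * exp (- c * l1_dist x m)"
    by (rule exists_decaying_green_function) blast
  have "\<bar>Gker L k a mu0 n m\<bar>
      \<le> real N ^ CARD('d) * C * exp (- (c * N) * dist (lat_pt (eta L k) n) (lat_pt (eta L k) m))"
    for n m :: "int^'d"
    using Gker_eq_scaled_solution[OF assms(2-4,6) G(1,2), of n] decay[of m n]
      exp_l1_dist_le_exp_dist[OF N, of c n m] pos
    by (simp add: N_def eta abs_mult mult.assoc mult_left_mono order_trans)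
  then show ?thesis
    using pos N by (intro exI[of _ "real N ^ CARD('d) * C"] exI[of _ "c * N"]) simp
qed

end
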